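(* Let $S$ be a finite semigroup. The following are equivalent: (i) $\mathbb{N}\times S$ has only countably many subsemigroups; (ii) $\mathbb{N}\times S$ has only countably many pairwise non-isomorphic subsemigroups; (iii) $S$ is a union of groups (i.e. every element of $S$ lies in some subgroup of $S$).
   Context: $\mathbb{N}=\{1,2,3,\dots\}$ is the free monogenic semigroup (positive integers under addition); $\mathbb{N}\times S$ is the direct product with componentwise operation. *)

theory Defs
  imports Main "HOL-Library.Countable_Set"
begin

text \<open>The positive integers N = {1,2,...} are represented by nat with 1 \<le> n.
  The semigroup N \<times> S has componentwise operation.\<close>

definition NS_mult :: "nat \<times> 'a::semigroup_mult \<Rightarrow> nat \<times> 'a \<Rightarrow> nat \<times> 'a" where
  "NS_mult p q = (fst p + fst q, snd p * snd q)"

definition subsemigroup_NS :: "(nat \<times> 'a::semigroup_mult) set \<Rightarrow> bool" where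
  "subsemigroup_NS T \<longleftrightarrow> T \<subseteq> {p. 1 \<le> fst p} \<and> T \<noteq> {} \<and>
     (\<forall>x\<in>T. \<forall>y\<in>T. NS_mult x y \<in> T)"

definition iso_NS :: "(nat \<times> 'a::semigroup_mult) set \<Rightarrow> (nat \<times> 'a) set \<Rightarrow> bool" where
  "iso_NS T1 T2 \<longleftrightarrow> (\<exists>f. bij_betw f T1 T2 \<and>
     (\<forall>x\<in>T1. \<forall>y\<in>T1. f (NS_mult x y) = NS_mult (f x) (f y)))"

definition subgroup_of_sg :: "'a::semigroup_mult set \<Rightarrow> bool" where
  "subgroup_of_sg G \<longleftrightarrow> (\<forall>x\<in>G. \<forall>y\<in>G. x * y \<in> G) \<and>
     (\<exists>e\<in>G. (\<forall>g\<in>G. e * g = g \<and> g * e = g) \<and> (\<forall>g\<in>G. \<exists>h\<in>G. g * h = e \<and> h * g = e))"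

definition union_of_groups :: "'a::semigroup_mult itself \<Rightarrow> bool" where
  "union_of_groups _ \<longleftrightarrow> (\<forall>x::'a. \<exists>G. subgroup_of_sg G \<and> x \<in> G)"

end

theory Submission
  imports Defs
begin

(*
  If every element of S lies in a subgroup, then every s satisfies s^(k+1) = s for some k > 0,
  so each fibre {n. (n, s) \<in> T} of a subsemigroup T of N \<times> S is closed under adding a
  fixed positive period. A periodic subset of N is determined by its period and a finite
  initial segment, and a subsemigroup is determined by its finitely many fibres: there are
  only countably many subsemigroups.

  Conversely, if some x \<in> S lies in no subgroup, then x is never a proper power of itself.
  For A \<subseteq> N let T_A be the subsemigroup generated by A \<times> {x}; its indecomposable
  elements are exactly A \<times> {x}. An isomorphism from T_A onto T_B therefore induces a map
  \<phi> from A onto B with \<phi> a + \<phi> b = \<phi> c + \<phi> d whenever a + b = c + d. For the sets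
  A = {1} \<union> 2N \<union> (2X + 3) such a map is determined by \<phi> 1, \<phi> 2, \<phi> 4, so each isomorphism
  class contains only countably many T_A, while there are uncountably many sets X.
*)

text \<open>\<open>spow x n\<close> is x to the power n + 1: a semigroup has no unit, so exponents are shifted by one.\<close>

primrec spow :: "'a::semigroup_mult \<Rightarrow> nat \<Rightarrow> 'a" where
  "spow x 0 = x"
| "spow x (Suc n) = x * spow x n"

lemma spow_mult: "spow x i * spow x j = spow x (i + j + 1)"
  by (induction i) (simp_all add: mult.assoc)

lemma spow_periodic:
  assumes "spow x (Suc k) = x"
  shows "spow x (j + m * Suc k) = spow x j"
proof -
  have period: "spow x (j + Suc k) = spow x j" for j
    using assms by (induction j) simp_all
  show ?thesis
  proof (induction m)
    case (Suc m)
    have "j + Suc m * Suc k = (j + m * Suc k) + Suc k" by simp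
    then show ?case using period Suc.IH by metis
  qed simp
qed

lemma subgroup_of_sg_range_spow:
  assumes "spow x (Suc k) = x"
  shows "subgroup_of_sg (range (spow x))"
proof -
  let ?e = "spow x k"
  have unit: "?e * spow x j = spow x j \<and> spow x j * ?e = spow x j" for j
    using spow_periodic[OF assms, of j 1] by (simp add: spow_mult add.commute)
  have inverse: "spow x i * spow x (k * (i + 2)) = ?e \<and> spow x (k * (i + 2)) * spow x i = ?e" for i
  proof -
    have "i + k * (i + 2) + 1 = k + (i + 1) * Suc k" "k * (i + 2) + i + 1 = k + (i + 1) * Suc k"
      by (simp_all add: algebra_simps)
    then show ?thesis by (simp only: spow_mult spow_periodic[OF assms])
  qed
  have closed: "a * b \<in> range (spow x)" if ab: "a \<in> range (spow x)" "b \<in> range (spow x)" for a b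
  proof -
    obtain i j where "a = spow x i" "b = spow x j" using ab by blast
    then have "a * b = spow x (i + j + 1)" by (simp only: spow_mult)
    then show ?thesis by (simp only: rangeI)
  qed
  have "\<forall>g\<in>range (spow x). ?e * g = g \<and> g * ?e = g"
    using unit by auto
  moreover have "\<forall>g\<in>range (spow x). \<exists>h\<in>range (spow x). g * h = ?e \<and> h * g = ?e"
    using inverse by auto
  ultimately show ?thesis
    unfolding subgroup_of_sg_def using closed rangeI[of "spow x" k] by blast
qed

lemma union_of_groups_if_spow_returns:
  assumes "\<And>x::'a::semigroup_mult. \<exists>k. spow x (Suc k) = x"
  shows "union_of_groups TYPE('a)"
  unfolding union_of_groups_def
proof
  fix x :: 'a
  obtain k where "spow x (Suc k) = x" using assms by blast
  then show "\<exists>G. subgroup_of_sg G \<and> x \<in> G"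
    using subgroup_of_sg_range_spow rangeI[of "spow x" 0] by fastforce
qed

lemma spow_returns_if_union_of_groups:
  assumes "union_of_groups TYPE('a::{semigroup_mult,finite})"
  shows "\<exists>k. spow (x::'a) (Suc k) = x"
proof -
  obtain G where G: "subgroup_of_sg G" "x \<in> G"
    using assms unfolding union_of_groups_def by blast
  then obtain e where closed: "\<forall>y\<in>G. \<forall>z\<in>G. y * z \<in> G" and unit: "\<forall>g\<in>G. e * g = g"
    and inverse: "\<forall>g\<in>G. \<exists>h\<in>G. g * h = e \<and> h * g = e"
    unfolding subgroup_of_sg_def by blast
  obtain h where "h * x = e" using inverse G(2) by blast
  have spow_in: "spow x n \<in> G" for n
    by (induction n) (use closed G(2) in auto)
  have cancel: "spow x i = spow x j" if "x * spow x i = x * spow x j" for i j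
  proof -
    have "(h * x) * spow x i = (h * x) * spow x j"
      using that by (simp add: mult.assoc)
    then show ?thesis using \<open>h * x = e\<close> unit spow_in by simp
  qed
  have cancel_prefix: "spow x 0 = spow x m" if "spow x i = spow x (i + m)" for i m
    using that
  proof (induction i)
    case (Suc i)
    then show ?case using cancel by (metis add_Suc spow.simps(2))
  qed simp
  have "\<not> inj (spow x)"
    using range_inj_infinite[of "spow x"] by auto
  then obtain i j where "i < j" "spow x i = spow x j"
    unfolding inj_def by (metis nat_neq_iff)
  moreover obtain m where "j = i + Suc m"
    using less_imp_Suc_add[OF \<open>i < j\<close>] by auto
  ultimately have "spow x 0 = spow x (Suc m)"
    using cancel_prefix by blast
  then show ?thesis by (metis spow.simps(1))
qed

lemma NS_mult_assoc: "NS_mult (NS_mult u v) w = NS_mult u (NS_mult v w)"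
  by (simp add: NS_mult_def mult.assoc add.assoc)

lemma subsemigroup_NS_mult_mem:
  "subsemigroup_NS T \<Longrightarrow> u \<in> T \<Longrightarrow> v \<in> T \<Longrightarrow> NS_mult u v \<in> T"
  unfolding subsemigroup_NS_def by blast

lemma subsemigroup_NS_spow_mem:
  assumes "subsemigroup_NS T" and "(a, s) \<in> T"
  shows "(Suc k * a, spow s k) \<in> T"
proof (induction k)
  case 0
  then show ?case using assms(2) by simp
next
  case (Suc k)
  then have "NS_mult (a, s) (Suc k * a, spow s k) \<in> T"
    using subsemigroup_NS_mult_mem assms by blast
  then show ?case by (simp add: NS_mult_def)
qed

section \<open>Countably many subsemigroups when S is a union of groups\<close>

lemma periodic_nat_set_generated:
  fixes A :: "nat set"
  assumes "q > 0" and periodic: "\<And>n. n \<in> A \<Longrightarrow> n + q \<in> A"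
  obtains N where "A = (\<Union>b\<in>A \<inter> {..<N}. range (\<lambda>c. b + q * c))"
proof -
  define least where "least r = (LEAST m. m \<in> A \<and> m mod q = r)" for r
  have least: "least (n mod q) \<in> A \<and> least (n mod q) mod q = n mod q \<and> least (n mod q) \<le> n"
    if "n \<in> A" for n
    using that LeastI[of "\<lambda>m. m \<in> A \<and> m mod q = n mod q" n]
      Least_le[of "\<lambda>m. m \<in> A \<and> m mod q = n mod q" n]
    unfolding least_def by auto
  obtain N where N: "\<And>r. r < q \<Longrightarrow> least r < N"
    using finite_nat_set_iff_bounded[of "least ` {..<q}"] by auto
  have "A = (\<Union>b\<in>A \<inter> {..<N}. range (\<lambda>c. b + q * c))"
  proof (intro subset_antisym subsetI)
    fix n assume "n \<in> A"
    define b where "b = least (n mod q)"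
    have b: "b \<in> A" "b mod q = n mod q" "b \<le> n"
      using least[OF \<open>n \<in> A\<close>] unfolding b_def by auto
    have "b < N" unfolding b_def using N \<open>q > 0\<close> by simp
    have "q dvd n - b" using mod_eq_dvd_iff_nat[of b n q] b(2,3) by argo
    then obtain c where "n - b = q * c" by (rule dvdE)
    then have "n = b + q * c" using \<open>b \<le> n\<close> by simp
    then show "n \<in> (\<Union>b\<in>A \<inter> {..<N}. range (\<lambda>c. b + q * c))"
      using b \<open>b < N\<close> by (intro UN_I[of b] range_eqI) auto
  next
    fix n assume "n \<in> (\<Union>b\<in>A \<inter> {..<N}. range (\<lambda>c. b + q * c))"
    then obtain b c where "b \<in> A" "n = b + q * c" by blast
    moreover have "b + q * c \<in> A" for c
    proof (induction c)
      case (Suc c)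
      then have "b + q * c + q \<in> A" by (rule periodic)
      then show ?case by (simp add: algebra_simps)
    qed (simp add: \<open>b \<in> A\<close>)
    ultimately show "n \<in> A" by blast
  qed
  then show ?thesis by (rule that)
qed

lemma countable_periodic_nat_sets: "countable {A :: nat set. \<exists>q>0. \<forall>n\<in>A. n + q \<in> A}"
proof -
  let ?generated = "\<lambda>(q, F). \<Union>b\<in>F. range (\<lambda>c. b + q * c :: nat)"
  have "{A. \<exists>q>0. \<forall>n\<in>A. n + q \<in> A} \<subseteq> ?generated ` (UNIV \<times> Collect finite)"
  proof
    fix A :: "nat set" assume "A \<in> {A. \<exists>q>0. \<forall>n\<in>A. n + q \<in> A}"
    then obtain q where "q > 0" "\<And>n. n \<in> A \<Longrightarrow> n + q \<in> A" by blast
    then obtain N where "A = (\<Union>b\<in>A \<inter> {..<N}. range (\<lambda>c. b + q * c))"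
      using periodic_nat_set_generated[of q A] by blast
    then show "A \<in> ?generated ` (UNIV \<times> Collect finite)"
      by (intro image_eqI[of _ _ "(q, A \<inter> {..<N})"]) auto
  qed
  moreover have "countable (?generated ` (UNIV \<times> Collect finite))"
    by (intro countable_image countable_SIGMA countable_Collect_finite countableI_type)
  ultimately show ?thesis by (rule countable_subset)
qed

lemma countable_sets_by_fibers:
  fixes \<T> :: "('b \<times> 'a::finite) set set"
  assumes "countable \<P>" and fibers: "\<And>T s. T \<in> \<T> \<Longrightarrow> {n. (n, s) \<in> T} \<in> \<P>"
  shows "countable \<T>"
proof (rule countable_image_inj_on)
  let ?code = "\<lambda>T s. to_nat_on \<P> {n. (n, s) \<in> T}"
  show "countable (?code ` \<T>)" by (rule countableI_type)
  show "inj_on ?code \<T>"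
  proof (rule inj_onI)
    fix T T' assume T: "T \<in> \<T>" "T' \<in> \<T>" and "?code T = ?code T'"
    have "{n. (n, s) \<in> T} = {n. (n, s) \<in> T'}" for s
    proof (rule inj_onD[OF inj_on_to_nat_on[OF assms(1)] _ fibers[OF T(1)] fibers[OF T(2)]])
      show "to_nat_on \<P> {n. (n, s) \<in> T} = to_nat_on \<P> {n. (n, s) \<in> T'}"
        using fun_cong[OF \<open>?code T = ?code T'\<close>, of s] by simp
    qed
    then show "T = T'" by (simp add: set_eq_iff)
  qed
qed

lemma subsemigroup_NS_fiber_periodic:
  assumes "union_of_groups TYPE('a::{semigroup_mult,finite})"
    and T: "subsemigroup_NS (T :: (nat \<times> 'a) set)"
  shows "\<exists>q>0. \<forall>n. (n, s) \<in> T \<longrightarrow> (n + q, s) \<in> T"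
proof (cases "\<exists>a. (a, s) \<in> T")
  case False
  then show ?thesis by auto
next
  case True
  then obtain a where a: "(a, s) \<in> T" by blast
  then have "a \<ge> 1" using T unfolding subsemigroup_NS_def by auto
  obtain k where k: "spow s (Suc k) = s"
    using spow_returns_if_union_of_groups[OF assms(1)] by blast
  have "(n + Suc k * a, s) \<in> T" if "(n, s) \<in> T" for n
  proof -
    have "NS_mult (n, s) (Suc k * a, spow s k) \<in> T"
      using subsemigroup_NS_mult_mem[OF T that subsemigroup_NS_spow_mem[OF T a]] .
    then show ?thesis using k by (simp add: NS_mult_def)
  qed
  then show ?thesis using \<open>a \<ge> 1\<close> by (intro exI[of _ "Suc k * a"]) auto
qed

lemma countable_subsemigroups_if_union_of_groups:
  assumes "union_of_groups TYPE('a::{semigroup_mult,finite})"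
  shows "countable {T :: (nat \<times> 'a) set. subsemigroup_NS T}"
proof (rule countable_sets_by_fibers[OF countable_periodic_nat_sets])
  fix T :: "(nat \<times> 'a) set" and s
  assume "T \<in> {T. subsemigroup_NS T}"
  then show "{n. (n, s) \<in> T} \<in> {A. \<exists>q>0. \<forall>n\<in>A. n + q \<in> A}"
    using subsemigroup_NS_fiber_periodic[OF assms] by simp
qed

section \<open>Uncountably many isomorphism types when S is not a union of groups\<close>

inductive_set gen_NS :: "'a::semigroup_mult \<Rightarrow> nat set \<Rightarrow> (nat \<times> 'a) set" for x A where
  generator: "n \<in> A \<Longrightarrow> (n, x) \<in> gen_NS x A"
| mult: "n \<in> A \<Longrightarrow> u \<in> gen_NS x A \<Longrightarrow> NS_mult (n, x) u \<in> gen_NS x A"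

lemma snd_gen_NS: "u \<in> gen_NS x A \<Longrightarrow> \<exists>j. snd u = spow x j"
proof (induction rule: gen_NS.induct)
  case (generator n)
  then show ?case by (metis spow.simps(1) snd_conv)
next
  case (mult n u)
  then show ?case by (metis NS_mult_def spow.simps(2) snd_conv fst_conv)
qed

lemma gen_NS_closed: "u \<in> gen_NS x A \<Longrightarrow> v \<in> gen_NS x A \<Longrightarrow> NS_mult u v \<in> gen_NS x A"
  by (induction rule: gen_NS.induct) (simp_all add: NS_mult_assoc gen_NS.mult)

lemma subsemigroup_NS_gen_NS:
  assumes "A \<noteq> {}" and "0 \<notin> A"
  shows "subsemigroup_NS (gen_NS x A)"
proof -
  have "1 \<le> fst u" if "u \<in> gen_NS x A" for u
    using that
  proof (induction rule: gen_NS.induct)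
    case (generator n)
    then show ?case using assms(2) by (cases n) auto
  qed (simp add: NS_mult_def)
  then show ?thesis
    unfolding subsemigroup_NS_def using assms(1) gen_NS_closed gen_NS.generator by blast
qed

definition indecomposable :: "(nat \<times> 'a::semigroup_mult) set \<Rightarrow> nat \<times> 'a \<Rightarrow> bool" where
  "indecomposable T u \<longleftrightarrow> u \<in> T \<and> \<not> (\<exists>v\<in>T. \<exists>w\<in>T. u = NS_mult v w)"

lemma indecomposable_gen_NS_iff:
  assumes "\<forall>j. spow x (Suc j) \<noteq> x"
  shows "indecomposable (gen_NS x A) u \<longleftrightarrow> (\<exists>n\<in>A. u = (n, x))"
proof
  assume "indecomposable (gen_NS x A) u"
  then have "u \<in> gen_NS x A" and "\<not> (\<exists>v\<in>gen_NS x A. \<exists>w\<in>gen_NS x A. u = NS_mult v w)"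
    unfolding indecomposable_def by auto
  then show "\<exists>n\<in>A. u = (n, x)"
    by (cases rule: gen_NS.cases) (auto intro: gen_NS.generator)
next
  assume "\<exists>n\<in>A. u = (n, x)"
  then obtain n where n: "n \<in> A" "u = (n, x)" by blast
  have "u \<noteq> NS_mult v w" if vw: "v \<in> gen_NS x A" "w \<in> gen_NS x A" for v w
  proof -
    obtain i j where "snd v = spow x i" "snd w = spow x j"
      using snd_gen_NS[OF vw(1)] snd_gen_NS[OF vw(2)] by blast
    then have "snd (NS_mult v w) = spow x (Suc (i + j))"
      by (simp add: NS_mult_def spow_mult)
    then show ?thesis using assms n(2) by (metis snd_conv)
  qed
  then show "indecomposable (gen_NS x A) u"
    unfolding indecomposable_def using n gen_NS.generator by blast
qed

lemma indecomposable_bij_hom_iff: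
  assumes bij: "bij_betw f T1 T2"
    and hom: "\<forall>a\<in>T1. \<forall>b\<in>T1. f (NS_mult a b) = NS_mult (f a) (f b)"
    and closed: "\<forall>a\<in>T1. \<forall>b\<in>T1. NS_mult a b \<in> T1"
    and "u \<in> T1"
  shows "indecomposable T2 (f u) \<longleftrightarrow> indecomposable T1 u"
proof -
  have "(\<exists>v\<in>T2. \<exists>w\<in>T2. f u = NS_mult v w) \<longleftrightarrow> (\<exists>v\<in>T1. \<exists>w\<in>T1. f u = f (NS_mult v w))"
    unfolding bij_betw_imp_surj_on[OF bij, symmetric] using hom by simp
  also have "\<dots> \<longleftrightarrow> (\<exists>v\<in>T1. \<exists>w\<in>T1. u = NS_mult v w)"
    using inj_on_eq_iff[OF bij_betw_imp_inj_on[OF bij] \<open>u \<in> T1\<close>] closed by auto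
  finally show ?thesis
    unfolding indecomposable_def using bij_betw_apply[OF bij \<open>u \<in> T1\<close>] \<open>u \<in> T1\<close> by blast
qed

lemma iso_NS_refl: "iso_NS T T"
  unfolding iso_NS_def by (intro exI[of _ id]) (simp add: bij_betw_id)

lemma iso_NS_sym:
  assumes "iso_NS T1 T2" and closed: "\<forall>a\<in>T1. \<forall>b\<in>T1. NS_mult a b \<in> T1"
  shows "iso_NS T2 T1"
proof -
  obtain f where bij: "bij_betw f T1 T2"
    and hom: "\<forall>a\<in>T1. \<forall>b\<in>T1. f (NS_mult a b) = NS_mult (f a) (f b)"
    using assms(1) unfolding iso_NS_def by blast
  let ?g = "inv_into T1 f"
  have g: "bij_betw ?g T2 T1" using bij by (rule bij_betw_inv_into)
  have "?g (NS_mult a b) = NS_mult (?g a) (?g b)" if ab: "a \<in> T2" "b \<in> T2" for a b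
  proof -
    have "?g a \<in> T1" "?g b \<in> T1"
      using bij_betw_apply[OF g] ab by blast+
    moreover have "f (NS_mult (?g a) (?g b)) = NS_mult a b"
      using hom calculation bij_betw_inv_into_right[OF bij] ab by simp
    ultimately show ?thesis
      using bij_betw_inv_into_left[OF bij] closed by metis
  qed
  then show ?thesis unfolding iso_NS_def using g by blast
qed

lemma iso_NS_trans:
  assumes "iso_NS T1 T2" and "iso_NS T2 T3"
  shows "iso_NS T1 T3"
proof -
  obtain f g where f: "bij_betw f T1 T2" "\<forall>a\<in>T1. \<forall>b\<in>T1. f (NS_mult a b) = NS_mult (f a) (f b)"
    and g: "bij_betw g T2 T3" "\<forall>a\<in>T2. \<forall>b\<in>T2. g (NS_mult a b) = NS_mult (g a) (g b)"
    using assms unfolding iso_NS_def by blast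
  have "bij_betw (g \<circ> f) T1 T3" using f(1) g(1) by (rule bij_betw_trans)
  moreover have "(g \<circ> f) (NS_mult a b) = NS_mult ((g \<circ> f) a) ((g \<circ> f) b)" if "a \<in> T1" "b \<in> T1" for a b
    using f(2) g(2) bij_betw_apply[OF f(1)] that by simp
  ultimately show ?thesis unfolding iso_NS_def by blast
qed

definition freiman_hom2 :: "nat set \<Rightarrow> (nat \<Rightarrow> nat) \<Rightarrow> bool" where
  "freiman_hom2 A \<phi> \<longleftrightarrow>
     (\<forall>a\<in>A. \<forall>b\<in>A. \<forall>c\<in>A. \<forall>d\<in>A. a + b = c + d \<longrightarrow> \<phi> a + \<phi> b = \<phi> c + \<phi> d)"

lemma freiman_hom2D:
  "freiman_hom2 A \<phi> \<Longrightarrow> a \<in> A \<Longrightarrow> b \<in> A \<Longrightarrow> c \<in> A \<Longrightarrow> d \<in> A \<Longrightarrow> a + b = c + d \<Longrightarrow>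
    \<phi> a + \<phi> b = \<phi> c + \<phi> d"
  unfolding freiman_hom2_def by blast

lemma freiman_hom2_of_iso_gen_NS:
  assumes x: "\<forall>j. spow x (Suc j) \<noteq> x" and "iso_NS (gen_NS x A) (gen_NS x B)"
  obtains \<phi> where "\<phi> ` A = B" and "freiman_hom2 A \<phi>"
proof -
  obtain f where bij: "bij_betw f (gen_NS x A) (gen_NS x B)"
    and hom: "\<forall>u\<in>gen_NS x A. \<forall>v\<in>gen_NS x A. f (NS_mult u v) = NS_mult (f u) (f v)"
    using assms(2) unfolding iso_NS_def by blast
  have "\<forall>u\<in>gen_NS x A. \<forall>v\<in>gen_NS x A. NS_mult u v \<in> gen_NS x A"
    using gen_NS_closed by blast
  note indecomposable_iff = indecomposable_bij_hom_iff[OF bij hom this]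
  define \<phi> where "\<phi> n = fst (f (n, x))" for n
  have f_generator: "f (n, x) = (\<phi> n, x) \<and> \<phi> n \<in> B" if "n \<in> A" for n
  proof -
    have "(n, x) \<in> gen_NS x A" using that by (rule gen_NS.generator)
    moreover have "indecomposable (gen_NS x A) (n, x)"
      using indecomposable_gen_NS_iff[OF x] that by blast
    ultimately have "indecomposable (gen_NS x B) (f (n, x))"
      using indecomposable_iff by blast
    then obtain m where "m \<in> B" "f (n, x) = (m, x)"
      using indecomposable_gen_NS_iff[OF x] by blast
    then show ?thesis unfolding \<phi>_def by simp
  qed
  have "B \<subseteq> \<phi> ` A"
  proof
    fix b assume "b \<in> B"
    then have "(b, x) \<in> f ` gen_NS x A"
      using bij_betw_imp_surj_on[OF bij] gen_NS.generator by blast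
    then obtain u where u: "u \<in> gen_NS x A" "f u = (b, x)" by (metis imageE)
    have "indecomposable (gen_NS x B) (f u)"
      using u(2) \<open>b \<in> B\<close> by (simp add: indecomposable_gen_NS_iff[OF x])
    then have "indecomposable (gen_NS x A) u"
      using indecomposable_iff[OF u(1)] by blast
    then obtain n where "n \<in> A" "u = (n, x)"
      using indecomposable_gen_NS_iff[OF x] by blast
    then show "b \<in> \<phi> ` A" using f_generator u(2) by force
  qed
  then have "\<phi> ` A = B" using f_generator by blast
  moreover have "freiman_hom2 A \<phi>"
    unfolding freiman_hom2_def
  proof (intro ballI impI)
    fix a b c d assume abcd: "a \<in> A" "b \<in> A" "c \<in> A" "d \<in> A" and "a + b = c + d"
    then have mem: "(a, x) \<in> gen_NS x A" "(b, x) \<in> gen_NS x A" "(c, x) \<in> gen_NS x A"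
      "(d, x) \<in> gen_NS x A"
      by (simp_all add: gen_NS.generator)
    have "NS_mult (f (a, x)) (f (b, x)) = f (NS_mult (a, x) (b, x))"
      using hom mem by simp
    also have "\<dots> = f (NS_mult (c, x) (d, x))"
      using \<open>a + b = c + d\<close> by (simp add: NS_mult_def)
    also have "\<dots> = NS_mult (f (c, x)) (f (d, x))"
      using hom mem by simp
    finally show "\<phi> a + \<phi> b = \<phi> c + \<phi> d"
      using f_generator abcd by (simp add: NS_mult_def)
  qed
  ultimately show ?thesis by (rule that)
qed

text \<open>With \<open>(p, q, r) = (\<phi> 1, \<phi> 2, \<phi> 4)\<close>: \<open>\<phi>\<close> is an arithmetic progression on the even
  numbers because \<open>(2n + 4) + 2 = (2n + 2) + 4\<close>, and \<open>(2n + 3) + 1 = (2n + 2) + 2\<close> gives the odd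
  values.\<close>

definition freiman_value :: "int \<times> int \<times> int \<Rightarrow> nat \<Rightarrow> int" where
  "freiman_value t a = (case t of (p, q, r) \<Rightarrow>
     if a = 1 then p else q + int ((a - 2) div 2) * (r - q) + (if odd a then q - p else 0))"

lemma freiman_hom2_determined:
  assumes hom: "freiman_hom2 A \<phi>"
    and A: "1 \<in> A" "\<And>n. 2 * n + 2 \<in> A" "0 \<notin> A"
    and "a \<in> A"
  shows "int (\<phi> a) = freiman_value (int (\<phi> 1), int (\<phi> 2), int (\<phi> 4)) a"
proof -
  have two: "2 \<in> A" and four: "4 \<in> A"
    using A(2)[of 0] A(2)[of 1]
    by (simp_all only: mult_0_right mult_1_right add_0 numeral_Bit0 one_add_one)
  have even: "int (\<phi> (2 * n + 2)) = int (\<phi> 2) + int n * (int (\<phi> 4) - int (\<phi> 2))" for n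
  proof (induction n)
    case (Suc n)
    have "2 * Suc n + 2 = 2 * n + 4" by simp
    then have "2 * n + 4 \<in> A" using A(2)[of "Suc n"] by metis
    then have "\<phi> (2 * n + 4) + \<phi> 2 = \<phi> (2 * n + 2) + \<phi> 4"
      by (rule freiman_hom2D[OF hom _ two A(2)[of n] four]) simp
    then show ?case
      unfolding \<open>2 * Suc n + 2 = 2 * n + 4\<close> using Suc.IH by (simp add: algebra_simps)
  qed (simp add: numeral_2_eq_2)
  have "a \<noteq> 0" using \<open>a \<in> A\<close> A(3) by metis
  then have "a = 1 \<or> (\<exists>n. a = 2 * n + 2) \<or> (\<exists>n. a = 2 * n + 3)" by presburger
  then consider "a = 1" | n where "a = 2 * n + 2" | n where "a = 2 * n + 3" by blast
  then show ?thesis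
  proof cases
    case 1
    then show ?thesis by (simp add: freiman_value_def)
  next
    case (2 n)
    then show ?thesis using even[of n] by (simp add: freiman_value_def)
  next
    case (3 n)
    have "\<phi> (2 * n + 3) + \<phi> 1 = \<phi> (2 * n + 2) + \<phi> 2"
      using \<open>a \<in> A\<close> 3 by (intro freiman_hom2D[OF hom _ A(1) A(2)[of n] two]) simp_all
    then show ?thesis using even[of n] 3 by (simp add: freiman_value_def algebra_simps)
  qed
qed

definition code_set :: "nat set \<Rightarrow> nat set" where
  "code_set X = insert 1 (range (\<lambda>n. 2 * n + 2)) \<union> (\<lambda>n. 2 * n + 3) ` X"

lemma inj_code_set: "inj code_set"
proof (rule injI)
  fix X Y assume "code_set X = code_set Y"
  moreover have "n \<in> X \<longleftrightarrow> 2 * n + 3 \<in> code_set X" for n X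
  proof -
    have "2 * n + 3 \<noteq> 2 * m + 2" for m by presburger
    then show ?thesis unfolding code_set_def by auto
  qed
  ultimately show "X = Y" by blast
qed

lemma countable_iso_class_gen_NS_code_set:
  assumes x: "\<forall>j. spow x (Suc j) \<noteq> x"
  shows "countable {X. iso_NS (gen_NS x (code_set X)) T}"
proof (cases "\<exists>X0. iso_NS (gen_NS x (code_set X0)) T")
  case False
  then show ?thesis by simp
next
  case True
  then obtain X0 where X0: "iso_NS (gen_NS x (code_set X0)) T" by blast
  have code_set: "1 \<in> code_set X" "\<And>n. 2 * n + 2 \<in> code_set X" "0 \<notin> code_set X" for X
    unfolding code_set_def by auto
  let ?family = "range (\<lambda>t. (\<lambda>a. nat (freiman_value t a)) ` code_set X0)"
  have "code_set ` {X. iso_NS (gen_NS x (code_set X)) T} \<subseteq> ?family"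
  proof clarify
    fix X assume "iso_NS (gen_NS x (code_set X)) T"
    then have "iso_NS (gen_NS x (code_set X0)) (gen_NS x (code_set X))"
      using X0 iso_NS_sym iso_NS_trans gen_NS_closed by blast
    then obtain \<phi> where \<phi>: "\<phi> ` code_set X0 = code_set X" "freiman_hom2 (code_set X0) \<phi>"
      using freiman_hom2_of_iso_gen_NS[OF x] by blast
    let ?t = "(int (\<phi> 1), int (\<phi> 2), int (\<phi> 4))"
    have "code_set X = (\<lambda>a. nat (freiman_value ?t a)) ` code_set X0"
      unfolding \<phi>(1)[symmetric]
      using freiman_hom2_determined[OF \<phi>(2) code_set] by (intro image_cong) (simp_all, metis nat_int)
    then show "code_set X \<in> ?family" by blast
  qed
  then have "countable (code_set ` {X. iso_NS (gen_NS x (code_set X)) T})"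
    by (rule countable_subset) simp
  then show ?thesis
    using inj_on_subset[OF inj_code_set subset_UNIV] by (rule countable_image_inj_on)
qed

lemma uncountable_UNIV_nat_set: "uncountable (UNIV :: nat set set)"
  using Cantors_theorem[of "UNIV :: nat set"] unfolding uncountable_def by auto

lemma union_of_groups_if_countably_many_iso_types:
  fixes C :: "(nat \<times> 'a::semigroup_mult) set set"
  assumes "countable C" and "\<forall>T. subsemigroup_NS T \<longrightarrow> (\<exists>T'\<in>C. iso_NS T T')"
  shows "union_of_groups TYPE('a)"
proof (rule ccontr)
  assume "\<not> union_of_groups TYPE('a)"
  then obtain x :: 'a where x: "\<forall>j. spow x (Suc j) \<noteq> x"
    using union_of_groups_if_spow_returns by blast
  have "subsemigroup_NS (gen_NS x (code_set X))" for X
    by (rule subsemigroup_NS_gen_NS) (auto simp: code_set_def)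
  then have "UNIV \<subseteq> (\<Union>T\<in>C. {X. iso_NS (gen_NS x (code_set X)) T})"
    using assms(2) by blast
  moreover have "countable (\<Union>T\<in>C. {X. iso_NS (gen_NS x (code_set X)) T})"
    using assms(1) countable_iso_class_gen_NS_code_set[OF x] by blast
  ultimately show False
    using uncountable_UNIV_nat_set countable_subset by blast
qed

theorem theoremD:
  shows "(countable {T :: (nat \<times> 'a::{semigroup_mult,finite}) set. subsemigroup_NS T}
            \<longleftrightarrow> (\<exists>C. countable C \<and> C \<subseteq> {T :: (nat \<times> 'a) set. subsemigroup_NS T} \<and>
                    (\<forall>T. subsemigroup_NS T \<longrightarrow> (\<exists>T'\<in>C. iso_NS T T'))))
       \<and> ((\<exists>C. countable C \<and> C \<subseteq> {T :: (nat \<times> 'a) set. subsemigroup_NS T} \<and>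
                    (\<forall>T. subsemigroup_NS T \<longrightarrow> (\<exists>T'\<in>C. iso_NS T T')))
            \<longleftrightarrow> union_of_groups TYPE('a))"
proof -
  let ?subsemigroups = "{T :: (nat \<times> 'a) set. subsemigroup_NS T}"
  let ?countably_many_types = "\<exists>C. countable C \<and> C \<subseteq> ?subsemigroups \<and>
    (\<forall>T. subsemigroup_NS T \<longrightarrow> (\<exists>T'\<in>C. iso_NS T T'))"
  have i_ii: "countable ?subsemigroups \<Longrightarrow> ?countably_many_types"
    using iso_NS_refl by (intro exI[of _ ?subsemigroups]) blast
  have ii_iii: "?countably_many_types \<Longrightarrow> union_of_groups TYPE('a)"
    using union_of_groups_if_countably_many_iso_types by blast
  have iii_i: "union_of_groups TYPE('a) \<Longrightarrow> countable ?subsemigroups"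
    by (rule countable_subsemigroups_if_union_of_groups)
  show ?thesis using i_ii ii_iii iii_i by blast
qed

end
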